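(* Let $\lambda>0$ and consider the Yule (pure-birth) tree with speciation rate $\lambda$ started from an initial bifurcation. For $n\ge 2$, let $P_n$ (respectively $I_n$) be the expected sum of the lengths of the pendant (respectively interior) edges of the tree at the moment just before the $(n+1)$-st leaf appears, i.e. the tree with $n$ leaves observed at the end of the period during which it has exactly $n$ leaves. Set $p_n=P_n/n$ and $i_n=I_n/(n-2)$. Then for all $n\ge 3$, $$i_n=p_n=\frac{1}{2\lambda}.$$ (In particular $P_n=\frac{n}{2\lambda}$ for all $n\ge 2$.) *)

theory Defs
  imports "HOL-Probability.Probability"
begin

text \<open>Probability space driving the Yule tree with speciation rate l, started from
  an initial bifurcation at time 0.  Coordinate k (k \<ge> 2) carries a pair:
  the holding time of the period with exactly k leaves, exponential with rate k*l,
  and the index (uniform on 0..k-1) of the leaf that splits at the end of that period.\<close>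
definition yule_space :: "real \<Rightarrow> (nat \<Rightarrow> real \<times> nat) measure" where
  "yule_space l = PiM {2..} (\<lambda>k. density lborel (exponential_density (real k * l))
                                   \<Otimes>\<^sub>M measure_pmf (pmf_of_set {..<k}))"

text \<open>yule_tree w m = (t, L, I): the tree with m+2 leaves, observed at time t, the end
  of the period during which it has exactly m+2 leaves.  L lists the birth times of
  the current leaves (start times of pendant edges), I lists the lengths of the
  interior edges.  When leaf j splits at time t, its pendant edge (born at L!j)
  becomes an interior edge of length t - L!j and two new leaves born at t appear.\<close>
primrec yule_tree :: "(nat \<Rightarrow> real \<times> nat) \<Rightarrow> nat \<Rightarrow> real \<times> real list \<times> real list" where
  "yule_tree w 0 = (fst (w 2), [0, 0], [])"
| "yule_tree w (Suc m) =
     (case yule_tree w m of (t, L, I) \<Rightarrow>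
        let j = snd (w (m + 2))
        in (t + fst (w (m + 3)), take j L @ drop (Suc j) L @ [t, t], I @ [t - L ! j]))"

definition pendant_length :: "real \<times> real list \<times> real list \<Rightarrow> real" where
  "pendant_length s = (case s of (t, L, I) \<Rightarrow> sum_list (map (\<lambda>b. t - b) L))"

definition interior_length :: "real \<times> real list \<times> real list \<Rightarrow> real" where
  "interior_length s = (case s of (t, L, I) \<Rightarrow> sum_list I)"

definition yule_P :: "real \<Rightarrow> nat \<Rightarrow> real" where
  "yule_P l n = (\<integral>w. pendant_length (yule_tree w (n - 2)) \<partial>yule_space l)"

definition yule_I :: "real \<Rightarrow> nat \<Rightarrow> real" where
  "yule_I l n = (\<integral>w. interior_length (yule_tree w (n - 2)) \<partial>yule_space l)"

end

(* Write T_k for the holding time of the period with k leaves (exponential with rate k*l) and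
   j_k for the index of the leaf that splits at its end (uniform on {0..<k}).  For the tree with
   m+2 leaves let P_m and I_m be its pendant and interior lengths, D_m = T_2 + ... + T_{m+1} the
   time at which it reached m+2 leaves (start_time), b_0, ..., b_{m+1} the birth times of its
   leaves (leaf_births), and
     A_m = sum_i (D_m - b_i)               (age_sum: pendant length at the start of the period),
     N_m = (D_m + T_{m+2}) - b_{j_{m+2}}    (new_edge: interior edge created at its end).
   Pointwise, for almost every realisation,
     P_m = A_m + (m+2) T_{m+2},   P_{m+1} = P_m - N_m + (m+3) T_{m+3},   I_{m+1} = I_m + N_m.
   Since T_{m+2} and j_{m+2} are independent of the past, taking expectations gives
     E[P_m] = E[A_m] + 1/l,   E[N_m] = 1/((m+2) l) + E[A_m]/(m+2),
   and induction on m yields E[P_m] = (m+2)/(2l) and E[I_m] = m/(2l), whence the theorem. *)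
theory Submission
  imports Defs
begin

section \<open>The combinatorics of a realisation\<close>

type_synonym realisation = "nat \<Rightarrow> real \<times> nat"

definition end_time :: "nat \<Rightarrow> realisation \<Rightarrow> real" where
  "end_time m w = fst (yule_tree w m)"

definition leaf_births :: "nat \<Rightarrow> realisation \<Rightarrow> real list" where
  "leaf_births m w = fst (snd (yule_tree w m))"

definition start_time :: "nat \<Rightarrow> realisation \<Rightarrow> real" where
  "start_time m w = (\<Sum>k\<in>{2..<m+2}. fst (w k))"

abbreviation split_index :: "nat \<Rightarrow> realisation \<Rightarrow> nat" where
  "split_index m w \<equiv> snd (w (m + 2))"

definition age_sum :: "nat \<Rightarrow> realisation \<Rightarrow> real" where
  "age_sum m w = (\<Sum>i<m+2. start_time m w - leaf_births m w ! i)"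

definition new_edge :: "nat \<Rightarrow> realisation \<Rightarrow> real" where
  "new_edge m w = end_time m w - leaf_births m w ! split_index m w"

definition admissible :: "realisation \<Rightarrow> bool" where
  "admissible w \<longleftrightarrow> (\<forall>k\<ge>2. 0 \<le> fst (w k) \<and> snd (w k) < k)"

lemma end_time_0: "end_time 0 w = fst (w 2)"
  by (simp add: end_time_def)

lemma end_time_Suc: "end_time (Suc m) w = end_time m w + fst (w (m + 3))"
  by (simp add: end_time_def Let_def split: prod.split)

lemma leaf_births_0: "leaf_births 0 w = [0, 0]"
  by (simp add: leaf_births_def)

lemma leaf_births_Suc:
  "leaf_births (Suc m) w =
     take (split_index m w) (leaf_births m w) @ drop (Suc (split_index m w)) (leaf_births m w)
       @ [end_time m w, end_time m w]"
  by (simp add: leaf_births_def end_time_def Let_def split: prod.split)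

lemma interior_length_Suc:
  "interior_length (yule_tree w (Suc m)) = interior_length (yule_tree w m) + new_edge m w"
  by (simp add: interior_length_def new_edge_def end_time_def leaf_births_def Let_def
      split: prod.split)

lemma start_time_Suc: "start_time (Suc m) w = start_time m w + fst (w (m + 2))"
proof -
  have "{2..<Suc m + 2} = insert (m + 2) {2..<m + 2}" by auto
  then show ?thesis by (simp add: start_time_def)
qed

lemma end_time_eq: "end_time m w = start_time m w + fst (w (m + 2))"
  by (induction m) (simp_all add: end_time_0 end_time_Suc start_time_Suc start_time_def
      eval_nat_numeral)

lemma start_time_mono: "admissible w \<Longrightarrow> start_time m w \<le> start_time (Suc m) w"
  by (simp add: start_time_Suc admissible_def)

lemma start_time_nonneg: "admissible w \<Longrightarrow> 0 \<le> start_time m w"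
  unfolding start_time_def admissible_def by (intro sum_nonneg) auto

text \<open>The tree observed at the end of period m depends only on the coordinates 2..m+2, and its
  leaf birth times only on 2..m+1; so the births are independent of the coordinate m+2 that
  determines the next split.\<close>
lemma yule_tree_local:
  "(\<And>k. k \<in> {2..m+2} \<Longrightarrow> w k = w' k) \<Longrightarrow> yule_tree w m = yule_tree w' m"
proof (induction m)
  case (Suc m)
  then have "yule_tree w m = yule_tree w' m" "w (m+2) = w' (m+2)" "w (m+3) = w' (m+3)" by auto
  then show ?case by (simp add: Let_def split: prod.split)
qed simp

lemma leaf_births_local:
  assumes "\<And>k. k \<in> {2..<m+2} \<Longrightarrow> w k = w' k"
  shows "leaf_births m w = leaf_births m w'"
proof (cases m)
  case (Suc n)
  with assms have "yule_tree w n = yule_tree w' n" by (intro yule_tree_local) auto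
  then have "leaf_births n w = leaf_births n w'" "end_time n w = end_time n w'"
    by (simp_all add: leaf_births_def end_time_def)
  moreover have "w (n+2) = w' (n+2)" using assms Suc by auto
  ultimately show ?thesis using Suc by (simp only: leaf_births_Suc)
qed (simp add: leaf_births_0)

lemma leaf_births_invariant:
  assumes "admissible w"
  shows "length (leaf_births m w) = m + 2 \<and>
         (\<forall>b\<in>set (leaf_births m w). 0 \<le> b \<and> b \<le> start_time m w)"
proof (induction m)
  case 0
  show ?case by (simp add: leaf_births_0 start_time_def)
next
  case (Suc m)
  have j: "split_index m w < m + 2" using assms by (simp add: admissible_def)
  have new_births: "set (leaf_births (Suc m) w) \<subseteq> insert (end_time m w) (set (leaf_births m w))"
    unfolding leaf_births_Suc by (auto dest: in_set_takeD in_set_dropD)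
  have "start_time m w \<le> start_time (Suc m) w" "end_time m w = start_time (Suc m) w"
    using start_time_mono[OF assms] by (simp_all add: end_time_eq start_time_Suc)
  then have "\<forall>b\<in>set (leaf_births (Suc m) w). 0 \<le> b \<and> b \<le> start_time (Suc m) w"
    using new_births Suc start_time_nonneg[OF assms, of "Suc m"] by fastforce
  moreover have "length (leaf_births (Suc m) w) = Suc m + 2"
    using Suc j by (simp add: leaf_births_Suc)
  ultimately show ?case by blast
qed

lemma pendant_length_eq:
  "pendant_length (yule_tree w m) =
     (\<Sum>i<length (leaf_births m w). end_time m w - leaf_births m w ! i)"
  by (simp add: pendant_length_def end_time_def leaf_births_def sum_list_sum_nth
      atLeast0LessThan split: prod.split)

lemma pendant_length_age_sum:
  assumes "admissible w"
  shows "pendant_length (yule_tree w m) = age_sum m w + real (m + 2) * fst (w (m + 2))"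
proof -
  have len: "length (leaf_births m w) = m + 2" using leaf_births_invariant[OF assms] by simp
  have "pendant_length (yule_tree w m) = (\<Sum>i<m+2. end_time m w - leaf_births m w ! i)"
    by (simp only: pendant_length_eq len)
  also have "\<dots> = (\<Sum>i<m+2. (start_time m w - leaf_births m w ! i) + fst (w (m + 2)))"
    by (intro sum.cong) (simp_all add: end_time_eq)
  also have "\<dots> = age_sum m w + real (m + 2) * fst (w (m + 2))"
    by (simp only: sum.distrib age_sum_def sum_constant card_lessThan)
  finally show ?thesis .
qed

lemma split_leaf_pendant:
  fixes L :: "real list" and t s :: real
  assumes "j < length L"
  defines "L' \<equiv> take j L @ drop (Suc j) L @ [t, t]"
  shows "real (length L') * (t + s) - sum_list L' =
           (real (length L) * t - sum_list L) - (t - L ! j) + real (length L + 1) * s"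
proof -
  have "sum_list L = sum_list (take j L) + L ! j + sum_list (drop (Suc j) L)"
    using arg_cong[OF id_take_nth_drop[OF assms(1)], of sum_list] by simp
  moreover have "length L' = length L + 1" using assms by (simp add: L'_def)
  ultimately show ?thesis by (simp add: L'_def algebra_simps)
qed

text \<open>At a split the chosen pendant edge becomes interior and two new leaves appear; the
  m+3 leaves then grow during T_{m+3}.\<close>
lemma pendant_length_Suc:
  assumes "admissible w"
  shows "pendant_length (yule_tree w (Suc m)) =
           pendant_length (yule_tree w m) - new_edge m w + real (m + 3) * fst (w (m + 3))"
proof -
  have pend: "pendant_length (yule_tree w n) =
                real (length (leaf_births n w)) * end_time n w - sum_list (leaf_births n w)" for n
    by (simp add: pendant_length_eq sum_subtractf sum_list_sum_nth atLeast0LessThan)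
  have len: "length (leaf_births m w) = m + 2" using leaf_births_invariant[OF assms] by simp
  have "split_index m w < length (leaf_births m w)" using assms len by (simp add: admissible_def)
  from split_leaf_pendant[OF this, of "end_time m w" "fst (w (m + 3))"] len
  show ?thesis
    unfolding pend leaf_births_Suc end_time_Suc new_edge_def by simp
qed

lemma new_edge_eq:
  assumes "admissible w"
  shows "new_edge m w = fst (w (m + 2)) +
           (\<Sum>i<m+2. (if split_index m w = i then 1 else 0) * (start_time m w - leaf_births m w ! i))"
proof -
  have "split_index m w < m + 2" using assms by (simp add: admissible_def)
  then have "(\<Sum>i<m+2. (if split_index m w = i then 1 else 0) * (start_time m w - leaf_births m w ! i))
           = start_time m w - leaf_births m w ! split_index m w"
    by (simp add: if_distrib[of "\<lambda>c. c * _"] sum.delta' cong: if_cong)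
  then show ?thesis by (simp add: new_edge_def end_time_eq)
qed

section \<open>Measurability\<close>

text \<open>Entries of the list produced by a split, as an explicit case distinction on the split
  index j and the list length n; this exhibits each entry as a measurable function.\<close>
lemma nth_split_list:
  assumes "length L = n"
  shows "(take j L @ drop (Suc j) L @ [t, t]) ! i =
    (if i < min j n then L ! i
     else if i - min j n < n - Suc j then L ! (Suc j + (i - min j n))
     else if i - min j n - (n - Suc j) < 2 then t
     else [] ! (i - min j n - (n - Suc j) - 2))"
proof -
  have "[t, t] ! k = (if k < 2 then t else [] ! (k - 2))" for k
    by (cases k; cases "k - 1") (auto simp: numeral_2_eq_2)
  then show ?thesis using assms by (auto simp: nth_append min_def)
qed

locale coordinate_measurable =
  fixes N :: "realisation measure"
  assumes holding_time_measurable: "\<And>k. (\<lambda>w. fst (w k)) \<in> borel_measurable N"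
    and index_measurable: "\<And>k. (\<lambda>w. snd (w k)) \<in> measurable N (count_space UNIV)"
begin

lemma start_time_measurable: "start_time m \<in> borel_measurable N"
  unfolding start_time_def[abs_def] using holding_time_measurable by measurable

lemma end_time_measurable: "end_time m \<in> borel_measurable N"
  unfolding end_time_eq[abs_def] using start_time_measurable holding_time_measurable
  by measurable

lemma leaf_births_measurable:
  "(\<lambda>w. length (leaf_births m w)) \<in> measurable N (count_space UNIV) \<and>
   (\<forall>i. (\<lambda>w. leaf_births m w ! i) \<in> borel_measurable N)"
proof (induction m)
  case 0
  show ?case by (simp add: leaf_births_0)
next
  case (Suc m)
  note IH = Suc[THEN conjunct1] Suc[THEN conjunct2, rule_format]
  have "(\<lambda>w. length (leaf_births (Suc m) w)) \<in> measurable N (count_space UNIV)"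
  proof -
    have length_measurable:
      "(\<lambda>w. min j (length (leaf_births m w)) + (length (leaf_births m w) - Suc j) + 2)
         \<in> measurable N (count_space UNIV)" for j
      using measurable_compose[OF IH(1), of "\<lambda>n. min j n + (n - Suc j) + 2" "count_space UNIV"]
      by simp
    have "length (leaf_births (Suc m) w) = min (split_index m w) (length (leaf_births m w))
            + (length (leaf_births m w) - Suc (split_index m w)) + 2" for w
      by (simp add: leaf_births_Suc)
    then show ?thesis
      by (simp only:) (rule measurable_compose_countable[OF length_measurable index_measurable])
  qed
  moreover have "(\<lambda>w. leaf_births (Suc m) w ! i) \<in> borel_measurable N" for i
  proof -
    define F where "F j n w =
      (if i < min j n then leaf_births m w ! i
       else if i - min j n < n - Suc j then leaf_births m w ! (Suc j + (i - min j n))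
       else if i - min j n - (n - Suc j) < 2 then end_time m w
       else [] ! (i - min j n - (n - Suc j) - 2))" for j n w
    have F_measurable: "F j n \<in> borel_measurable N" for j n
      unfolding F_def[abs_def] using IH(2) end_time_measurable by measurable
    have F_length_measurable: "(\<lambda>w. F j (length (leaf_births m w)) w) \<in> borel_measurable N" for j
      by (rule measurable_compose_countable[OF F_measurable IH(1)])
    have "leaf_births (Suc m) w ! i = F (split_index m w) (length (leaf_births m w)) w" for w
      unfolding leaf_births_Suc F_def by (rule nth_split_list) simp
    then show ?thesis
      by (simp only:) (rule measurable_compose_countable[OF F_length_measurable index_measurable])
  qed
  ultimately show ?case by blast
qed

lemma leaf_birth_measurable: "(\<lambda>w. leaf_births m w ! i) \<in> borel_measurable N"
  using leaf_births_measurable by blast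

lemma age_sum_measurable: "age_sum m \<in> borel_measurable N"
  unfolding age_sum_def[abs_def] using start_time_measurable leaf_birth_measurable
  by measurable

lemma new_edge_measurable: "new_edge m \<in> borel_measurable N"
proof -
  have "(\<lambda>w. leaf_births m w ! split_index m w) \<in> borel_measurable N"
    by (rule measurable_compose_countable[OF leaf_birth_measurable index_measurable])
  then show ?thesis unfolding new_edge_def[abs_def] using end_time_measurable by measurable
qed

lemma pendant_length_measurable: "(\<lambda>w. pendant_length (yule_tree w m)) \<in> borel_measurable N"
proof -
  have "(\<lambda>w. \<Sum>i<n. end_time m w - leaf_births m w ! i) \<in> borel_measurable N" for n
    using end_time_measurable leaf_birth_measurable by measurable
  then show ?thesis unfolding pendant_length_eq
    by (rule measurable_compose_countable) (rule leaf_births_measurable[THEN conjunct1])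
qed

lemma split_indicator_measurable:
  "(\<lambda>w. if split_index m w = i then 1 else 0 :: real) \<in> borel_measurable N"
  by (rule measurable_compose_countable[where g="split_index m"]) (simp_all add: index_measurable)

end

section \<open>The probability space\<close>

text \<open>The factor of coordinate k.  Only the coordinates k \<ge> 2 are used; clamping k at 2 makes
  every factor a probability space, as required by the product space locale.\<close>
definition yule_factor :: "real \<Rightarrow> nat \<Rightarrow> (real \<times> nat) measure" where
  "yule_factor l k = density lborel (exponential_density (real (max k 2) * l))
                       \<Otimes>\<^sub>M measure_pmf (pmf_of_set {..<max k 2})"

lemma yule_space_eq: "yule_space l = PiM {2..} (yule_factor l)"
  unfolding yule_space_def yule_factor_def by (intro PiM_cong) (auto simp: max_def)

lemma yule_factor_eq:
  "2 \<le> k \<Longrightarrow> yule_factor l k = density lborel (exponential_density (real k * l))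
                                  \<Otimes>\<^sub>M measure_pmf (pmf_of_set {..<k})"
  by (simp add: yule_factor_def max_def)

lemma prob_space_yule_factor: "0 < l \<Longrightarrow> prob_space (yule_factor l k)"
  unfolding yule_factor_def
  by (intro prob_space_pair prob_space_exponential_density prob_space_measure_pmf) simp

lemma sets_yule_factor: "sets (yule_factor l k) = sets (borel \<Otimes>\<^sub>M count_space UNIV)"
  unfolding yule_factor_def
  by (intro sets_pair_measure_cong) (auto simp: sets_measure_pmf_count_space)

lemma space_yule_factor: "space (yule_factor l k) = UNIV"
  unfolding yule_factor_def by (simp add: space_pair_measure)

lemma component_measurable:
  "(\<lambda>w. w k) \<in> measurable (PiM J (yule_factor l)) (yule_factor l k)"
proof (cases "k \<in> J")
  case False
  have "(\<lambda>w. undefined) \<in> measurable (PiM J (yule_factor l)) (yule_factor l k)"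
    by (simp add: space_yule_factor)
  then show ?thesis
    by (rule measurable_cong[THEN iffD1, rotated]) (use False in \<open>auto simp: space_PiM\<close>)
qed (rule measurable_component_singleton)

lemma coordinate_measurable_PiM: "coordinate_measurable (PiM J (yule_factor l))"
proof
  fix k
  have "(\<lambda>w. w k) \<in> measurable (PiM J (yule_factor l)) (borel \<Otimes>\<^sub>M count_space UNIV)"
    using component_measurable by (subst measurable_cong_sets[OF refl sets_yule_factor[symmetric]])
  then show "(\<lambda>w. fst (w k)) \<in> borel_measurable (PiM J (yule_factor l))"
    and "(\<lambda>w. snd (w k)) \<in> measurable (PiM J (yule_factor l)) (count_space UNIV)"
    by measurable
qed

lemma AE_yule_factor:
  assumes "0 < l" "2 \<le> k"
  shows "AE x in yule_factor l k. 0 \<le> fst x \<and> snd x < k"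
proof -
  let ?E = "density lborel (exponential_density (real k * l))"
  let ?U = "measure_pmf (pmf_of_set {..<k})"
  interpret E: prob_space ?E by (rule prob_space_exponential_density) (use assms in simp)
  interpret EU: pair_sigma_finite ?E ?U by unfold_locales
  have index: "AE y in ?U. y < k"
    using assms by (intro AE_pmfI) (auto simp: set_pmf_of_set[of "{..<k}"] lessThan_empty_iff)
  have "AE x in ?E. 0 \<le> x"
    by (subst AE_density) (auto simp: exponential_density_def)
  then have "AE x in ?E. AE y in ?U. 0 \<le> fst (x, y) \<and> snd (x, y) < k"
  proof eventually_elim
    case (elim x)
    show ?case using index by eventually_elim (simp add: elim)
  qed
  then show ?thesis
    unfolding yule_factor_eq[OF assms(2)] by (intro EU.AE_pair_measure) measurable
qed

locale yule =
  fixes l :: real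
  assumes rate_pos: "0 < l"
begin

abbreviation Y :: "realisation measure" where
  "Y \<equiv> PiM {2..} (yule_factor l)"

sublocale P: product_prob_space "yule_factor l" "{2..}"
  by (simp add: product_prob_space_def product_prob_space_axioms_def product_sigma_finite_def
      prob_space_yule_factor[OF rate_pos] prob_space_imp_sigma_finite)

sublocale coordinate_measurable Y
  by (rule coordinate_measurable_PiM)

lemma AE_admissible: "AE w in Y. admissible w"
proof -
  have "AE w in Y. 0 \<le> fst (w k) \<and> snd (w k) < k" if "2 \<le> k" for k
    using that by (intro P.AE_component AE_yule_factor rate_pos) auto
  then have "\<forall>k. AE w in Y. 2 \<le> k \<longrightarrow> 0 \<le> fst (w k) \<and> snd (w k) < k"
    by (auto intro: AE_I2)
  then show ?thesis by (simp add: admissible_def AE_all_countable)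
qed

lemma integral_component:
  fixes h :: "real \<times> nat \<Rightarrow> real"
  assumes k: "2 \<le> k" and h: "h \<in> borel_measurable (borel \<Otimes>\<^sub>M count_space UNIV)"
  shows "integrable Y (\<lambda>w. h (w k)) \<longleftrightarrow> integrable (yule_factor l k) h"
    and "(\<integral>w. h (w k) \<partial>Y) = (\<integral>x. h x \<partial>yule_factor l k)"
proof -
  have distr: "distr Y (yule_factor l k) (\<lambda>w. w k) = yule_factor l k"
    using k by (intro P.PiM_component) auto
  have h': "h \<in> borel_measurable (yule_factor l k)"
    using h by (simp add: measurable_cong_sets[OF sets_yule_factor refl])
  show "integrable Y (\<lambda>w. h (w k)) \<longleftrightarrow> integrable (yule_factor l k) h"
    using integrable_distr_eq[OF component_measurable[where J="{2..}"] h'] distr by simp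
  show "(\<integral>w. h (w k) \<partial>Y) = (\<integral>x. h x \<partial>yule_factor l k)"
    using integral_distr[OF component_measurable[where J="{2..}"] h'] distr by simp
qed

lemma holding_time_expectation:
  assumes k: "2 \<le> k"
  shows "integrable Y (\<lambda>w. fst (w k))" and "(\<integral>w. fst (w k) \<partial>Y) = 1 / (real k * l)"
proof -
  let ?r = "real k * l"
  have r: "0 < ?r" using k rate_pos by simp
  note F = prob_space_yule_factor[OF rate_pos, of k]
  have "distr (yule_factor l k) lborel fst
          = distr (yule_factor l k) (density lborel (exponential_density ?r)) fst"
    by (rule distr_cong) auto
  also have "\<dots> = density lborel (exponential_density ?r)"
    unfolding yule_factor_eq[OF k] by (rule measure_pmf.distr_pair_fst)
  finally have "distributed (yule_factor l k) lborel fst (exponential_density ?r)"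
    unfolding distributed_def by (simp add: measurable_cong_sets[OF sets_yule_factor refl])
  from prob_space.erlang_ith_moment_integrable[OF F r this, of 1] prob_space.erlang_ith_moment[OF F r this, of 1]
  have "integrable (yule_factor l k) fst" "(\<integral>x. fst x \<partial>yule_factor l k) = 1 / ?r"
    by simp_all
  with integral_component[OF k, of fst]
  show "integrable Y (\<lambda>w. fst (w k))" "(\<integral>w. fst (w k) \<partial>Y) = 1 / (real k * l)"
    by simp_all
qed

lemma split_index_probability:
  assumes k: "2 \<le> k" and i: "i < k"
  shows "integrable Y (\<lambda>w. if snd (w k) = i then 1 else 0 :: real)"
    and "(\<integral>w. (if snd (w k) = i then 1 else 0 :: real) \<partial>Y) = 1 / real k"
proof -
  interpret E: prob_space "density lborel (exponential_density (real k * l))"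
    by (rule prob_space_exponential_density) (use k rate_pos in simp)
  have indicator_eq: "(if snd x = i then 1 else 0 :: real) = indicator (UNIV \<times> {i}) x" for x
    by (auto simp: indicator_def mem_Times_iff)
  have h: "(indicator (UNIV \<times> {i}) :: _ \<Rightarrow> real) \<in> borel_measurable (borel \<Otimes>\<^sub>M count_space UNIV)"
    by (intro borel_measurable_indicator) auto
  have "emeasure (yule_factor l k) (UNIV \<times> {i}) = ennreal (1 / real k)"
    unfolding yule_factor_eq[OF k] using i
    by (subst measure_pmf.emeasure_pair_measure_Times)
       (auto simp: E.emeasure_space_1[simplified] emeasure_pmf_single
                   pmf_of_set[of "{..<k}"] lessThan_empty_iff)
  moreover have "UNIV \<times> {i} \<in> sets (yule_factor l k)" by (simp add: sets_yule_factor)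
  ultimately have "integrable (yule_factor l k) (indicator (UNIV \<times> {i}) :: _ \<Rightarrow> real)"
    and "(\<integral>x. indicator (UNIV \<times> {i}) x \<partial>yule_factor l k) = 1 / real k"
    by (auto intro: integrable_real_indicator simp: space_yule_factor measure_def)
  with integral_component[OF k h]
  show "integrable Y (\<lambda>w. if snd (w k) = i then 1 else 0 :: real)"
    and "(\<integral>w. (if snd (w k) = i then 1 else 0 :: real) \<partial>Y) = 1 / real k"
    by (simp_all add: indicator_eq)
qed

lemma integral_product_independent:
  fixes G :: "realisation \<Rightarrow> real" and h :: "real \<times> nat \<Rightarrow> real"
  assumes k: "2 \<le> k"
    and G_measurable: "G \<in> borel_measurable (PiM {2..<k} (yule_factor l))"
    and G_local: "\<And>w. G (restrict w {2..<k}) = G w"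
    and G_integrable: "integrable Y G"
    and h_measurable: "h \<in> borel_measurable (borel \<Otimes>\<^sub>M count_space UNIV)"
    and h_integrable: "integrable Y (\<lambda>w. h (w k))"
  shows "integrable Y (\<lambda>w. h (w k) * G w)"
    and "(\<integral>w. h (w k) * G w \<partial>Y) = (\<integral>w. h (w k) \<partial>Y) * (\<integral>w. G w \<partial>Y)"
proof -
  have "distr Y Y (\<lambda>x. \<lambda>i\<in>{2..}. x i) = distr Y Y (\<lambda>x. x)"
    by (rule distr_cong) (auto simp: space_PiM)
  also have "\<dots> = PiM {2..} (\<lambda>i. distr Y (yule_factor l i) (\<lambda>w. w i))"
    by (simp, intro PiM_cong refl P.PiM_component[symmetric]) auto
  finally have "P.indep_vars (yule_factor l) (\<lambda>k w. w k) {2..}"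
    by (subst P.indep_vars_iff_distr_eq_PiM) (auto intro: component_measurable)
  then have "P.indep_var (PiM {2..<k} (yule_factor l)) (\<lambda>w. restrict w {2..<k})
                         (PiM {k} (yule_factor l)) (\<lambda>w. restrict w {k})"
    by (rule P.indep_var_restrict) (use k in auto)
  moreover have "(\<lambda>v. h (v k)) \<in> borel_measurable (PiM {k} (yule_factor l))"
  proof (rule measurable_compose[OF _ h_measurable])
    show "(\<lambda>v. v k) \<in> measurable (PiM {k} (yule_factor l)) (borel \<Otimes>\<^sub>M count_space UNIV)"
      using component_measurable[where J="{k}" and k=k]
      by (subst measurable_cong_sets[OF refl sets_yule_factor[symmetric]])
  qed
  ultimately have "P.indep_var borel (G \<circ> (\<lambda>w. restrict w {2..<k}))
                                 borel ((\<lambda>v. h (v k)) \<circ> (\<lambda>w. restrict w {k}))"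
    using G_measurable by (intro P.indep_var_compose)
  moreover have "G \<circ> (\<lambda>w. restrict w {2..<k}) = G"
    "(\<lambda>v. h (v k)) \<circ> (\<lambda>w. restrict w {k}) = (\<lambda>w. h (w k))"
    using G_local by (auto simp: fun_eq_iff)
  ultimately have indep: "P.indep_var borel G borel (\<lambda>w. h (w k))" by simp
  show "integrable Y (\<lambda>w. h (w k) * G w)"
    using P.indep_var_integrable[OF indep G_integrable h_integrable] by (simp add: mult.commute)
  show "(\<integral>w. h (w k) * G w \<partial>Y) = (\<integral>w. h (w k) \<partial>Y) * (\<integral>w. G w \<partial>Y)"
    using P.indep_var_lebesgue_integral[OF indep G_integrable h_integrable]
    by (simp add: mult.commute)
qed

end

section \<open>Expectations\<close>

context yule
begin

lemma start_time_integrable: "integrable Y (start_time m)"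
  unfolding start_time_def[abs_def]
  by (intro Bochner_Integration.integrable_sum holding_time_expectation) auto

text \<open>The age of any leaf at the start of the period lies between 0 and the start time.\<close>
lemma leaf_age_integrable:
  assumes "i < m + 2"
  shows "integrable Y (\<lambda>w. start_time m w - leaf_births m w ! i)"
proof (rule Bochner_Integration.integrable_bound[OF start_time_integrable])
  show "(\<lambda>w. start_time m w - leaf_births m w ! i) \<in> borel_measurable Y"
    using start_time_measurable leaf_birth_measurable by measurable
  show "AE w in Y. norm (start_time m w - leaf_births m w ! i) \<le> norm (start_time m w)"
    using AE_admissible
  proof eventually_elim
    case (elim w)
    with leaf_births_invariant[OF elim, of m] assms
    show ?case by (auto simp: abs_real_def dest!: bspec[of _ _ "leaf_births m w ! i"])
  qed
qed

lemma age_sum_integrable: "integrable Y (age_sum m)"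
  unfolding age_sum_def[abs_def]
  by (intro Bochner_Integration.integrable_sum leaf_age_integrable) auto

text \<open>The leaf chosen at the end of period m is uniform and independent of the ages, which
  depend only on the earlier coordinates.\<close>
lemma chosen_age_expectation:
  assumes i: "i < m + 2"
  defines "A \<equiv> \<lambda>w. start_time m w - leaf_births m w ! i"
  shows "integrable Y (\<lambda>w. (if split_index m w = i then 1 else 0) * A w)"
    and "(\<integral>w. (if split_index m w = i then 1 else 0) * A w \<partial>Y) = (\<integral>w. A w \<partial>Y) / real (m + 2)"
proof -
  interpret past: coordinate_measurable "PiM {2..<m+2} (yule_factor l)"
    by (rule coordinate_measurable_PiM)
  have A_measurable: "A \<in> borel_measurable (PiM {2..<m+2} (yule_factor l))"
    unfolding A_def using past.start_time_measurable past.leaf_birth_measurable by measurable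
  have A_local: "A (restrict w {2..<m+2}) = A w" for w
  proof -
    have "start_time m (restrict w {2..<m+2}) = start_time m w"
      unfolding start_time_def by (intro sum.cong) auto
    moreover have "leaf_births m (restrict w {2..<m+2}) = leaf_births m w"
      by (rule leaf_births_local) auto
    ultimately show ?thesis by (simp add: A_def)
  qed
  have h: "(\<lambda>x. if snd x = i then 1 else 0 :: real) \<in> borel_measurable (borel \<Otimes>\<^sub>M count_space UNIV)"
    by measurable
  note product = integral_product_independent[OF _ A_measurable A_local _ h,
      unfolded A_def, OF _ leaf_age_integrable[OF i] split_index_probability(1)[OF _ i]]
  show "integrable Y (\<lambda>w. (if split_index m w = i then 1 else 0) * A w)"
    using product(1) by (simp add: A_def)
  show "(\<integral>w. (if split_index m w = i then 1 else 0) * A w \<partial>Y) = (\<integral>w. A w \<partial>Y) / real (m + 2)"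
    using product(2) split_index_probability(2)[OF _ i] by (simp add: A_def)
qed

text \<open>E[N_m] = E[T_{m+2}] + E[age of a uniformly chosen leaf] = 1/((m+2) l) + E[A_m]/(m+2).\<close>
lemma new_edge_expectation:
  shows "integrable Y (new_edge m)"
    and "(\<integral>w. new_edge m w \<partial>Y) = 1 / (real (m + 2) * l) + (\<integral>w. age_sum m w \<partial>Y) / real (m + 2)"
proof -
  define A where "A i w = start_time m w - leaf_births m w ! i" for i w
  define R where "R w = fst (w (m + 2)) + (\<Sum>i<m+2. (if split_index m w = i then 1 else 0) * A i w)"
    for w
  have chosen: "integrable Y (\<lambda>w. (if split_index m w = i then 1 else 0) * A i w)"
    "(\<integral>w. (if split_index m w = i then 1 else 0) * A i w \<partial>Y) = (\<integral>w. A i w \<partial>Y) / real (m + 2)"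
    if "i < m + 2" for i
    using chosen_age_expectation[OF that] by (simp_all add: A_def)
  have R_measurable: "R \<in> borel_measurable Y"
    unfolding R_def[abs_def] A_def
    using start_time_measurable leaf_birth_measurable holding_time_measurable
      split_indicator_measurable by measurable
  have R_integrable: "integrable Y R"
    unfolding R_def[abs_def]
    by (intro Bochner_Integration.integrable_add Bochner_Integration.integrable_sum
        holding_time_expectation chosen) auto
  have AE_eq: "AE w in Y. new_edge m w = R w"
    using AE_admissible by eventually_elim (simp add: new_edge_eq R_def A_def)
  show "integrable Y (new_edge m)"
    using integrable_cong_AE[OF new_edge_measurable R_measurable AE_eq] R_integrable by simp
  have "(\<integral>w. new_edge m w \<partial>Y) = (\<integral>w. R w \<partial>Y)"
    by (rule integral_cong_AE[OF new_edge_measurable R_measurable AE_eq])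
  also have "\<dots> = (\<integral>w. fst (w (m + 2)) \<partial>Y)
                    + (\<integral>w. (\<Sum>i<m+2. (if split_index m w = i then 1 else 0) * A i w) \<partial>Y)"
    unfolding R_def
    by (intro Bochner_Integration.integral_add Bochner_Integration.integrable_sum
        holding_time_expectation chosen) auto
  also have "(\<integral>w. (\<Sum>i<m+2. (if split_index m w = i then 1 else 0) * A i w) \<partial>Y)
               = (\<Sum>i<m+2. (\<integral>w. (if split_index m w = i then 1 else 0) * A i w \<partial>Y))"
    by (rule Bochner_Integration.integral_sum, rule chosen(1), simp)
  also have "\<dots> = (\<Sum>i<m+2. (\<integral>w. A i w \<partial>Y) / real (m + 2))"
    by (rule sum.cong, rule refl, rule chosen(2), simp)
  also have "(\<integral>w. fst (w (m + 2)) \<partial>Y) = 1 / (real (m + 2) * l)"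
    by (simp add: holding_time_expectation)
  also have "(\<Sum>i<m+2. (\<integral>w. A i w \<partial>Y) / real (m + 2)) = (\<integral>w. age_sum m w \<partial>Y) / real (m + 2)"
    unfolding age_sum_def sum_divide_distrib[symmetric] A_def
    by (subst Bochner_Integration.integral_sum) (auto intro: leaf_age_integrable)
  finally show "(\<integral>w. new_edge m w \<partial>Y) = 1 / (real (m + 2) * l) + (\<integral>w. age_sum m w \<partial>Y) / real (m + 2)" .
qed

text \<open>E[P_m] = E[ages at the start] + (m+2) E[T_{m+2}] = E[A_m] + 1/l.\<close>
lemma pendant_expectation:
  shows "integrable Y (\<lambda>w. pendant_length (yule_tree w m))"
    and "(\<integral>w. pendant_length (yule_tree w m) \<partial>Y) = (\<integral>w. age_sum m w \<partial>Y) + 1 / l"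
proof -
  define R where "R w = age_sum m w + real (m + 2) * fst (w (m + 2))" for w
  have AE_eq: "AE w in Y. pendant_length (yule_tree w m) = R w"
    using AE_admissible by eventually_elim (simp add: pendant_length_age_sum R_def)
  have R_measurable: "R \<in> borel_measurable Y"
    unfolding R_def[abs_def] using age_sum_measurable holding_time_measurable by measurable
  have R_integrable: "integrable Y R"
    unfolding R_def[abs_def]
    by (intro Bochner_Integration.integrable_add integrable_mult_right age_sum_integrable
        holding_time_expectation) simp
  show "integrable Y (\<lambda>w. pendant_length (yule_tree w m))"
    using integrable_cong_AE[OF pendant_length_measurable R_measurable AE_eq] R_integrable by simp
  have "(\<integral>w. pendant_length (yule_tree w m) \<partial>Y) = (\<integral>w. R w \<partial>Y)"
    by (rule integral_cong_AE[OF pendant_length_measurable R_measurable AE_eq])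
  also have "\<dots> = (\<integral>w. age_sum m w \<partial>Y) + 1 / l"
    unfolding R_def using rate_pos
    by (simp add: age_sum_integrable holding_time_expectation)
  finally show "(\<integral>w. pendant_length (yule_tree w m) \<partial>Y) = (\<integral>w. age_sum m w \<partial>Y) + 1 / l" .
qed

text \<open>E[P_{m+1}] = E[P_m] - E[N_m] + (m+3) E[T_{m+3}].\<close>
lemma pendant_expectation_Suc:
  "(\<integral>w. pendant_length (yule_tree w (Suc m)) \<partial>Y)
     = (\<integral>w. pendant_length (yule_tree w m) \<partial>Y) - (\<integral>w. new_edge m w \<partial>Y) + 1 / l"
proof -
  define R where "R w = pendant_length (yule_tree w m) - new_edge m w
                          + real (m + 3) * fst (w (m + 3))" for w
  have AE_eq: "AE w in Y. pendant_length (yule_tree w (Suc m)) = R w"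
    using AE_admissible by eventually_elim (unfold R_def, rule pendant_length_Suc)
  have R_measurable: "R \<in> borel_measurable Y"
    unfolding R_def[abs_def]
    using pendant_length_measurable new_edge_measurable holding_time_measurable by measurable
  have "(\<integral>w. pendant_length (yule_tree w (Suc m)) \<partial>Y) = (\<integral>w. R w \<partial>Y)"
    by (rule integral_cong_AE[OF pendant_length_measurable R_measurable AE_eq])
  also have "\<dots> = (\<integral>w. pendant_length (yule_tree w m) \<partial>Y) - (\<integral>w. new_edge m w \<partial>Y) + 1 / l"
    unfolding R_def using rate_pos
    by (simp add: pendant_expectation(1) new_edge_expectation(1) holding_time_expectation)
  finally show ?thesis .
qed

text \<open>The main induction: E[P_m] = (m+2)/(2l) and E[I_m] = m/(2l).  The inductive step uses
  E[P_m] = (m+2)/(2l) to get E[A_m] = m/(2l), hence E[N_m] = 1/(2l).\<close>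
lemma yule_expectations:
  "(\<integral>w. pendant_length (yule_tree w m) \<partial>Y) = real (m + 2) / (2 * l)
   \<and> integrable Y (\<lambda>w. interior_length (yule_tree w m))
   \<and> (\<integral>w. interior_length (yule_tree w m) \<partial>Y) = real m / (2 * l)"
proof (induction m)
  case 0
  have "(\<integral>w. pendant_length (yule_tree w 0) \<partial>Y) = (\<integral>w. 2 * fst (w 2) \<partial>Y)"
    by (simp add: pendant_length_def)
  also have "\<dots> = 1 / l" using holding_time_expectation(2)[of 2] rate_pos by simp
  finally show ?case using rate_pos by (simp add: interior_length_def)
next
  case (Suc m)
  then have age_sum: "(\<integral>w. age_sum m w \<partial>Y) = real m / (2 * l)"
    using pendant_expectation(2)[of m] rate_pos by (simp add: field_simps)
  have "1 / (n * l) + ((n - 2) / (2 * l)) / n = 1 / (2 * l)" if "0 < n" for n :: real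
    using that rate_pos by (simp add: field_simps)
  from this[of "real (m + 2)"]
  have new_edge: "(\<integral>w. new_edge m w \<partial>Y) = 1 / (2 * l)"
    unfolding new_edge_expectation(2) age_sum by simp
  have "(\<integral>w. pendant_length (yule_tree w (Suc m)) \<partial>Y) = real (m + 2) / (2 * l) - 1 / (2 * l) + 1 / l"
    using pendant_expectation_Suc[of m] Suc new_edge by simp
  also have "\<dots> = real (Suc m + 2) / (2 * l)"
    using rate_pos by (simp add: field_simps)
  finally have "(\<integral>w. pendant_length (yule_tree w (Suc m)) \<partial>Y) = real (Suc m + 2) / (2 * l)" .
  moreover have "integrable Y (\<lambda>w. interior_length (yule_tree w (Suc m)))"
    unfolding interior_length_Suc using Suc new_edge_expectation(1) by simp
  moreover have "(\<integral>w. interior_length (yule_tree w (Suc m)) \<partial>Y) = real (Suc m) / (2 * l)"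
    unfolding interior_length_Suc using Suc new_edge new_edge_expectation(1) rate_pos
    by (simp add: field_simps)
  ultimately show ?case by blast
qed

end

theorem theorem1:
  fixes l :: real
  assumes "l > 0"
  shows "(\<forall>n\<ge>3. yule_I l n / real (n - 2) = 1 / (2 * l) \<and> yule_P l n / real n = 1 / (2 * l))
         \<and> (\<forall>n\<ge>2. yule_P l n = real n / (2 * l))"
proof -
  interpret yule l using assms by unfold_locales
  have P: "yule_P l n = real n / (2 * l)" if "n \<ge> 2" for n
    using yule_expectations[of "n - 2"] that by (simp add: yule_P_def yule_space_eq)
  have I: "yule_I l n = real (n - 2) / (2 * l)" for n
    using yule_expectations[of "n - 2"] by (simp add: yule_I_def yule_space_eq)
  have "yule_I l n / real (n - 2) = 1 / (2 * l) \<and> yule_P l n / real n = 1 / (2 * l)"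
    if "n \<ge> 3" for n
    using P[of n] I[of n] that by simp
  with P show ?thesis by auto
qed

end
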